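(* Let $F \in \mathbb{C}^{n \times n}$ be a unitary matrix with $|F_{ij}|^2 \leq \frac{c}{n}$ for all $i,j$ (for some constant $c>0$), and let $S \subseteq \{1,\dots,n\}$ be an index set with $|S| = t$. Then for any $k$-sparse vector $z \in \mathbb{C}^{n}$, $$\|(F^{*})_S F z\|^2_2 \leq \frac{ktc}{n}\|z\|_2^2 .$$
   Context: For a matrix $B \in \mathbb{C}^{m\times N}$ and $S \subseteq \{1,\dots,N\}$, $(B)_S$ denotes the $m \times N$ matrix obtained from $B$ by replacing the columns indexed by $\{1,\dots,N\}\setminus S$ with zero columns. $F^*$ is the conjugate transpose of $F$. A vector is $k$-sparse if it has at most $k$ nonzero entries. *)

theory Defs
  imports "HOL-Analysis.Analysis"
begin

definition conj_transpose :: "complex^'n^'m \<Rightarrow> complex^'m^'n" where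
  "conj_transpose A = (\<chi> i j. cnj (A $ j $ i))"

definition unitary_mat :: "complex^'n^'n \<Rightarrow> bool" where
  "unitary_mat U \<longleftrightarrow> conj_transpose U ** U = mat 1 \<and> U ** conj_transpose U = mat 1"

definition restrict_cols :: "complex^'n^'m \<Rightarrow> 'n set \<Rightarrow> complex^'n^'m" where
  "restrict_cols B S = (\<chi> i j. if j \<in> S then B $ i $ j else 0)"

definition sparse :: "nat \<Rightarrow> complex^'n \<Rightarrow> bool" where
  "sparse k z \<longleftrightarrow> card {i. z $ i \<noteq> 0} \<le> k"

end

theory Submission
  imports Defs
begin

text \<open>Each entry of \<open>F z\<close> is a sum of at most \<open>k\<close> products \<open>F\<^sub>j\<^sub>l z\<^sub>l\<close>, so Cauchy-Schwarz over the
  support of \<open>z\<close> bounds its square by \<open>k (c/n) \<parallel>z\<parallel>\<^sup>2\<close>. Zeroing the columns of \<open>F\<^sup>*\<close> outside \<open>S\<close> is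
  the same as zeroing the entries of \<open>F z\<close> outside \<open>S\<close> before applying \<open>F\<^sup>*\<close>, and \<open>F\<^sup>*\<close> is an
  isometry; hence the squared norm is the sum of \<open>t\<close> such squared entries.\<close>

lemma power2_norm_vec: "(norm x)\<^sup>2 = (\<Sum>i\<in>UNIV. (norm (x $ i))\<^sup>2)"
  for x :: "'a::real_normed_vector ^ 'n"
  unfolding norm_vec_def L2_set_def by (simp add: sum_nonneg)

definition herm_inner :: "complex^'n \<Rightarrow> complex^'n \<Rightarrow> complex" where
  "herm_inner x y = (\<Sum>i\<in>UNIV. x $ i * cnj (y $ i))"

lemma herm_inner_self: "herm_inner x x = complex_of_real ((norm x)\<^sup>2)"
  unfolding herm_inner_def power2_norm_vec of_real_sum complex_norm_square ..

lemma herm_inner_matrix_vector_mult: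
  "herm_inner (A *v x) y = herm_inner x (conj_transpose A *v y)"
proof -
  have "herm_inner (A *v x) y = (\<Sum>i\<in>UNIV. \<Sum>j\<in>UNIV. A $ i $ j * x $ j * cnj (y $ i))"
    by (simp add: herm_inner_def matrix_vector_mult_def sum_distrib_right)
  also have "\<dots> = (\<Sum>j\<in>UNIV. \<Sum>i\<in>UNIV. x $ j * cnj (cnj (A $ i $ j) * y $ i))"
    by (subst sum.swap) (simp add: mult_ac)
  also have "\<dots> = herm_inner x (conj_transpose A *v y)"
    by (simp add: herm_inner_def matrix_vector_mult_def conj_transpose_def sum_distrib_left)
  finally show ?thesis .
qed

lemma conj_transpose_conj_transpose [simp]: "conj_transpose (conj_transpose A) = A"
  by (simp add: conj_transpose_def vec_eq_iff)

lemma norm_matrix_vector_mult_isometry: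
  fixes U :: "complex^'n^'m"
  assumes "conj_transpose U ** U = mat 1"
  shows "norm (U *v x) = norm x"
proof -
  have "complex_of_real ((norm (U *v x))\<^sup>2) = herm_inner (U *v x) (U *v x)"
    by (rule herm_inner_self[symmetric])
  also have "\<dots> = herm_inner x ((conj_transpose U ** U) *v x)"
    by (simp add: herm_inner_matrix_vector_mult matrix_vector_mul_assoc)
  also have "\<dots> = complex_of_real ((norm x)\<^sup>2)"
    by (simp add: assms herm_inner_self)
  finally have "(norm (U *v x))\<^sup>2 = (norm x)\<^sup>2"
    by (rule of_real_eq_iff[THEN iffD1])
  then show ?thesis
    by (simp add: power2_eq_iff_nonneg)
qed

lemma restrict_cols_mult_vector:
  "restrict_cols B S *v w = B *v (\<chi> j. if j \<in> S then w $ j else 0)"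
  by (auto simp: vec_eq_iff matrix_vector_mult_def restrict_cols_def intro!: sum.cong)

lemma power2_norm_restrict_vec:
  "(norm (\<chi> j. if j \<in> S then w $ j else 0))\<^sup>2 = (\<Sum>j\<in>S. (norm (w $ j))\<^sup>2)"
  for w :: "'a::real_normed_vector ^ 'n"
proof -
  have "(norm (if j \<in> S then w $ j else 0))\<^sup>2 = (if j \<in> S then (norm (w $ j))\<^sup>2 else 0)" for j
    by simp
  then show ?thesis
    by (simp add: power2_norm_vec sum.If_cases)
qed

lemma power2_cmod_sum_mult_le:
  "(cmod (\<Sum>l\<in>A. a l * b l))\<^sup>2 \<le> (\<Sum>l\<in>A. (cmod (a l))\<^sup>2) * (\<Sum>l\<in>A. (cmod (b l))\<^sup>2)"
proof -
  have "cmod (\<Sum>l\<in>A. a l * b l) \<le> (\<Sum>l\<in>A. cmod (a l) * cmod (b l))"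
    using norm_sum[of "\<lambda>l. a l * b l" A] by (simp add: norm_mult)
  then have "(cmod (\<Sum>l\<in>A. a l * b l))\<^sup>2 \<le> (\<Sum>l\<in>A. cmod (a l) * cmod (b l))\<^sup>2"
    by (simp add: power_mono)
  also have "\<dots> \<le> (\<Sum>l\<in>A. (cmod (a l))\<^sup>2) * (\<Sum>l\<in>A. (cmod (b l))\<^sup>2)"
    by (rule Cauchy_Schwarz_ineq_sum)
  finally show ?thesis .
qed

lemma power2_cmod_matrix_vector_mult_sparse_le:
  fixes M :: "complex^'n^'m"
  assumes entry_bound: "\<And>j. (cmod (M $ i $ j))\<^sup>2 \<le> b"
    and "sparse k z"
  shows "(cmod ((M *v z) $ i))\<^sup>2 \<le> real k * b * (norm z)\<^sup>2"
proof -
  define A where "A = {l. z $ l \<noteq> 0}"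
  have "card A \<le> k"
    using \<open>sparse k z\<close> by (simp add: sparse_def A_def)
  have "b \<ge> 0"
    using entry_bound by (meson order_trans zero_le_power2)
  have "(M *v z) $ i = (\<Sum>l\<in>A. M $ i $ l * z $ l)"
    unfolding matrix_vector_mult_def A_def by (auto intro: sum.mono_neutral_right)
  then have "(cmod ((M *v z) $ i))\<^sup>2
      \<le> (\<Sum>l\<in>A. (cmod (M $ i $ l))\<^sup>2) * (\<Sum>l\<in>A. (cmod (z $ l))\<^sup>2)"
    by (simp add: power2_cmod_sum_mult_le)
  also have "\<dots> \<le> (real k * b) * (norm z)\<^sup>2"
  proof (rule mult_mono)
    have "(\<Sum>l\<in>A. (cmod (M $ i $ l))\<^sup>2) \<le> real (card A) * b"
      using sum_mono[of A _ "\<lambda>_. b", OF entry_bound] by simp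
    also have "\<dots> \<le> real k * b"
      using \<open>card A \<le> k\<close> \<open>b \<ge> 0\<close> by (simp add: mult_right_mono)
    finally show "(\<Sum>l\<in>A. (cmod (M $ i $ l))\<^sup>2) \<le> real k * b" .
    show "(\<Sum>l\<in>A. (cmod (z $ l))\<^sup>2) \<le> (norm z)\<^sup>2"
      unfolding power2_norm_vec by (rule sum_mono2) auto
  qed (use \<open>b \<ge> 0\<close> in \<open>auto simp: sum_nonneg\<close>)
  finally show ?thesis .
qed

theorem lemma1:
  fixes F :: "complex^'n^'n" and c :: real and S :: "'n set" and t k :: nat
    and z :: "complex^'n"
  assumes "unitary_mat F"
    and "c > 0"
    and "\<And>i j. (cmod (F $ i $ j))\<^sup>2 \<le> c / real CARD('n)"
    and "card S = t"
    and "sparse k z"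
  shows "(norm (restrict_cols (conj_transpose F) S *v (F *v z)))\<^sup>2
           \<le> real k * real t * c / real CARD('n) * (norm z)\<^sup>2"
proof -
  have "conj_transpose (conj_transpose F) ** conj_transpose F = mat 1"
    using \<open>unitary_mat F\<close> by (simp add: unitary_mat_def)
  then have "(norm (restrict_cols (conj_transpose F) S *v (F *v z)))\<^sup>2
      = (\<Sum>j\<in>S. (cmod ((F *v z) $ j))\<^sup>2)"
    by (simp add: restrict_cols_mult_vector norm_matrix_vector_mult_isometry
        power2_norm_restrict_vec)
  also have "\<dots> \<le> (\<Sum>j\<in>S. real k * (c / real CARD('n)) * (norm z)\<^sup>2)"
    using assms(3,5) by (intro sum_mono power2_cmod_matrix_vector_mult_sparse_le)
  also have "\<dots> = real k * real t * c / real CARD('n) * (norm z)\<^sup>2"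
    using \<open>card S = t\<close> by simp
  finally show ?thesis .
qed

end
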